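(* Let $(\mathcal{S},d_{\mathcal{S}})$ and $(\mathcal{A},d_{\mathcal{A}})$ be metric spaces, $\gamma\in[0,1)$, and $\rho$ an initial state distribution on $\mathcal{S}$. Let $(\pi,p)$ and $(\pi',p')$ be two policy-configuration pairs such that $\pi'$ is $L_{\pi'}$-LC and $p'$ is $L_{p'}$-LC. If $\gamma L_{p'}(1+L_{\pi'})<1$, then $$\mathcal{W}\big(\mu_{\pi',p'},\mu_{\pi,p}\big)\le \frac{\gamma}{1-\gamma L_{p'}(1+L_{\pi'})}\int_{\mathcal{S}}\mu_{\pi,p}(ds)\,\mathcal{W}\big(p'_{\pi'}(\cdot|s),p_{\pi}(\cdot|s)\big).$$
   Context: A configuration is a Markov kernel $p$ assigning to each $(s,a)\in\mathcal{S}\times\mathcal{A}$ a probability measure $p(\cdot|s,a)$ on $\mathcal{S}$; a policy is a Markov kernel $\pi$ assigning to each $s$ a probability measure $\pi(\cdot|s)$ on $\mathcal{A}$. The state-state kernel is $p_\pi(ds'|s)=\int_{\mathcal{A}}\pi(da|s)p(ds'|s,a)$. The $\gamma$-discounted stationary distribution is $\mu_{\pi,p}=(1-\gamma)\sum_{t\ge0}\gamma^t\rho\, p_\pi^t$, equivalently the solution of $\mu_{\pi,p}=(1-\gamma)\rho+\gamma\,\mu_{\pi,p}p_\pi$. For probability measures $\mu,\nu$ on a metric space, $\mathcal{W}(\mu,\nu)=\sup_{\|f\|_L\le1}|\int f\,d(\mu-\nu)|$, where $\|f\|_L$ is the Lipschitz semi-norm. Product metrics are sums: $d_{\mathcal{S}\times\mathcal{A}}((s,a),(\bar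 s,\bar a))=d_{\mathcal{S}}(s,\bar s)+d_{\mathcal{A}}(a,\bar a)$. $p'$ is $L_{p'}$-LC if $\mathcal{W}(p'(\cdot|s,a),p'(\cdot|\bar s,\bar a))\le L_{p'}d_{\mathcal{S}\times\mathcal{A}}((s,a),(\bar s,\bar a))$ for all pairs; $\pi'$ is $L_{\pi'}$-LC if $\mathcal{W}(\pi'(\cdot|s),\pi'(\cdot|\bar s))\le L_{\pi'}d_{\mathcal{S}}(s,\bar s)$ for all $s,\bar s$. *)

theory Defs
  imports "HOL-Probability.Probability"
begin

text \<open>Wasserstein-1 (Kantorovich--Rubinstein) distance: supremum over 1-Lipschitz
  real functions of the difference of integrals.  Only functions integrable w.r.t. both
  measures are used (for measures with finite first moment this is every 1-Lipschitz
  function).\<close>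
definition wass :: "'s::metric_space measure \<Rightarrow> 's measure \<Rightarrow> ennreal" where
  "wass \<mu> \<nu> = (SUP f \<in> {f :: 's \<Rightarrow> real. 1-lipschitz_on UNIV f \<and> integrable \<mu> f \<and> integrable \<nu> f}.
                  ennreal \<bar>(\<integral>x. f x \<partial>\<mu>) - (\<integral>x. f x \<partial>\<nu>)\<bar>)"

definition state_kernel :: "('s \<Rightarrow> 'a \<Rightarrow> 's measure) \<Rightarrow> ('s \<Rightarrow> 'a measure) \<Rightarrow> 's \<Rightarrow> 's measure" where
  "state_kernel p \<pi> s = (\<pi> s \<bind> (\<lambda>a. p s a))"

primrec state_dist :: "'s measure \<Rightarrow> ('s \<Rightarrow> 's measure) \<Rightarrow> nat \<Rightarrow> 's measure" where
  "state_dist \<rho> P 0 = \<rho>"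
| "state_dist \<rho> P (Suc t) = (state_dist \<rho> P t \<bind> P)"

definition disc_dist :: "real \<Rightarrow> 's measure \<Rightarrow> ('s \<Rightarrow> 's measure) \<Rightarrow> 's measure" where
  "disc_dist \<gamma> \<rho> P = measure_of (space \<rho>) (sets \<rho>)
     (\<lambda>A. \<Sum>t. ennreal ((1 - \<gamma>) * \<gamma> ^ t) * emeasure (state_dist \<rho> P t) A)"

text \<open>Lipschitz continuity of kernels, product metric = sum of metrics.\<close>
definition config_LC :: "real \<Rightarrow> ('s::metric_space \<Rightarrow> 'a::metric_space \<Rightarrow> 's measure) \<Rightarrow> bool" where
  "config_LC L p \<longleftrightarrow> (\<forall>s a s' a'. wass (p s a) (p s' a') \<le> ennreal (L * (dist s s' + dist a a')))"

definition policy_LC :: "real \<Rightarrow> ('s::metric_space \<Rightarrow> 'a::metric_space measure) \<Rightarrow> bool" where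
  "policy_LC L \<pi> \<longleftrightarrow> (\<forall>s s'. wass (\<pi> s) (\<pi> s') \<le> ennreal (L * dist s s'))"

end

theory Submission
  imports Defs
begin

(* Write Q for the kernel p'_pi' and P for p_pi.  Q is K-Lipschitz in the Wasserstein
   distance with K = L_p' (1 + L_pi'), hence for every 1-Lipschitz f the function Q^j f is
   K^j-Lipschitz.  Exchanging one step of Q for one step of P at time k therefore moves
   rho P^k Q^(j+1) f by at most K^j gap_k, where gap_k = int W(Q s, P s) rho P^k(ds), and
   telescoping between rho Q^t and rho P^t gives
     |rho Q^t f - rho P^t f| <= sum_{k<t} K^(t-1-k) gap_k.
   Weighting with (1 - gamma) gamma^t and summing is a Cauchy product with the geometric series
   sum_m gamma (gamma K)^m, which produces the factor gamma / (1 - gamma K).  Unlike the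
   fixed-point argument through mu = (1 - gamma) rho + gamma mu P, this does not need to know
   beforehand that W(mu_Q, mu_P) is finite.
   Since W only tests functions that are integrable under both measures, integrability of the
   functions Q^j f has to be propagated along the way: a Lipschitz function integrable under one
   measure is integrable under every measure at finite distance from it. *)

lemma lipschitz_borel_measurable:
  fixes g :: "'x::metric_space \<Rightarrow> real"
  assumes "L-lipschitz_on UNIV g" and "sets M = sets borel"
  shows "g \<in> borel_measurable M"
  using borel_measurable_continuous_onI[OF lipschitz_on_continuous_on[OF assms(1)]] assms(2)
  by (simp cong: measurable_cong_sets)

lemma lipschitz_on_abs:
  fixes g :: "'x::metric_space \<Rightarrow> real"
  shows "L-lipschitz_on UNIV g \<Longrightarrow> L-lipschitz_on UNIV (\<lambda>x. \<bar>g x\<bar>)"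
  unfolding lipschitz_on_def dist_real_def by (auto intro: order_trans[OF abs_triangle_ineq3])

lemma lipschitz_on_zero_constant:
  "0-lipschitz_on UNIV g \<Longrightarrow> g = (\<lambda>_. g undefined)"
  using lipschitz_onD[of 0 UNIV g] by fastforce

lemma (in prob_space) AE_imp_ex_in_space:
  assumes "AE x in M. P x"
  shows "\<exists>x\<in>space M. P x"
proof (rule ccontr)
  assume "\<not> (\<exists>x\<in>space M. P x)"
  then have "AE x in M. False" using assms by (auto elim: AE_mp)
  then show False by simp
qed

lemma integral_bind_nonneg:
  fixes f :: "'b \<Rightarrow> real"
  assumes N: "N \<in> M \<rightarrow>\<^sub>M subprob_algebra B" and f[measurable]: "f \<in> borel_measurable B"
    and nonneg: "\<And>y. 0 \<le> f y" and int: "integrable (M \<bind> N) f"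
  shows "AE x in M. integrable (N x) f"
    and "integrable M (\<lambda>x. \<integral>y. f y \<partial>N x)"
    and "(\<integral>y. f y \<partial>(M \<bind> N)) = (\<integral>x. (\<integral>y. f y \<partial>N x) \<partial>M)"
proof -
  have f_N: "x \<in> space M \<Longrightarrow> f \<in> borel_measurable (N x)" for x
    using sets_kernel[OF N] by (simp cong: measurable_cong_sets)
  have inner_meas: "(\<lambda>x. \<integral>\<^sup>+y. f y \<partial>N x) \<in> borel_measurable M"
    using measurable_compose[OF N nn_integral_measurable_subprob_algebra, of "\<lambda>y. ennreal (f y)"] by simp
  have bind: "(\<integral>\<^sup>+y. f y \<partial>(M \<bind> N)) = (\<integral>\<^sup>+x. (\<integral>\<^sup>+y. f y \<partial>N x) \<partial>M)"
    by (rule nn_integral_bind[OF _ N]) simp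
  have fin: "(\<integral>\<^sup>+x. (\<integral>\<^sup>+y. f y \<partial>N x) \<partial>M) \<noteq> \<infinity>"
    using int nonneg unfolding bind[symmetric] by (simp add: nn_integral_eq_integral)
  have "AE x in M. (\<integral>\<^sup>+y. f y \<partial>N x) \<noteq> \<infinity>"
    by (rule nn_integral_PInf_AE[OF inner_meas fin])
  then show AE_int: "AE x in M. integrable (N x) f"
    using AE_space by eventually_elim (auto intro!: integrableI_nonneg simp: nonneg f_N less_top)
  have AE_eq: "AE x in M. (\<integral>\<^sup>+y. f y \<partial>N x) = ennreal (\<integral>y. f y \<partial>N x)"
    using AE_int by eventually_elim (simp add: nn_integral_eq_integral nonneg)
  have outer_meas: "(\<lambda>x. \<integral>y. f y \<partial>N x) \<in> borel_measurable M"
    using measurable_compose[OF N integral_measurable_subprob_algebra[OF f]] by simp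
  have outer: "(\<integral>\<^sup>+x. ennreal (\<integral>y. f y \<partial>N x) \<partial>M) = (\<integral>\<^sup>+x. (\<integral>\<^sup>+y. f y \<partial>N x) \<partial>M)"
    using AE_eq by (intro nn_integral_cong_AE) auto
  show "integrable M (\<lambda>x. \<integral>y. f y \<partial>N x)"
    using fin by (intro integrableI_nonneg outer_meas) (auto simp: outer nonneg less_top)
  have "(\<integral>y. f y \<partial>(M \<bind> N)) = enn2real (\<integral>\<^sup>+x. (\<integral>\<^sup>+y. f y \<partial>N x) \<partial>M)"
    using int by (simp add: integral_eq_nn_integral nonneg bind)
  also have "\<dots> = (\<integral>x. (\<integral>y. f y \<partial>N x) \<partial>M)"
    using outer_meas by (simp add: integral_eq_nn_integral nonneg outer)
  finally show "(\<integral>y. f y \<partial>(M \<bind> N)) = (\<integral>x. (\<integral>y. f y \<partial>N x) \<partial>M)" .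
qed

lemma
  fixes f :: "'b \<Rightarrow> real"
  assumes N: "N \<in> M \<rightarrow>\<^sub>M subprob_algebra B" and f[measurable]: "f \<in> borel_measurable B"
    and int: "integrable (M \<bind> N) f"
  shows AE_integrable_bind_kernel: "AE x in M. integrable (N x) f"
    and integrable_integral_bind_kernel: "integrable M (\<lambda>x. \<integral>y. f y \<partial>N x)"
    and integral_bind_kernel: "(\<integral>y. f y \<partial>(M \<bind> N)) = (\<integral>x. (\<integral>y. f y \<partial>N x) \<partial>M)"
proof -
  let ?pos = "\<lambda>y. max 0 (f y)" and ?neg = "\<lambda>y. max 0 (- f y)"
  have f_eq: "f = (\<lambda>y. ?pos y - ?neg y)" by auto
  have meas: "?pos \<in> borel_measurable B" "?neg \<in> borel_measurable B" by measurable
  have ints: "integrable (M \<bind> N) ?pos" "integrable (M \<bind> N) ?neg" using int by auto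
  note pos = integral_bind_nonneg[OF N meas(1) max.cobounded1 ints(1)]
  note neg = integral_bind_nonneg[OF N meas(2) max.cobounded1 ints(2)]
  show AE_int: "AE x in M. integrable (N x) f"
    using pos(1) neg(1) by eventually_elim (subst f_eq, rule Bochner_Integration.integrable_diff)
  have AE_eq: "AE x in M. (\<integral>y. f y \<partial>N x) = (\<integral>y. ?pos y \<partial>N x) - (\<integral>y. ?neg y \<partial>N x)"
    using pos(1) neg(1) by eventually_elim (subst f_eq, simp)
  have outer_meas: "(\<lambda>x. \<integral>y. f y \<partial>N x) \<in> borel_measurable M"
    using measurable_compose[OF N integral_measurable_subprob_algebra[OF f]] by simp
  show "integrable M (\<lambda>x. \<integral>y. f y \<partial>N x)"
    using integrable_cong_AE[OF outer_meas _ AE_eq] pos(2) neg(2) by auto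
  have "(\<integral>y. f y \<partial>(M \<bind> N)) = (\<integral>y. ?pos y \<partial>(M \<bind> N)) - (\<integral>y. ?neg y \<partial>(M \<bind> N))"
    using int by (subst f_eq) (auto intro!: Bochner_Integration.integral_diff)
  also have "\<dots> = (\<integral>x. (\<integral>y. ?pos y \<partial>N x) - (\<integral>y. ?neg y \<partial>N x) \<partial>M)"
    using pos neg by (simp add: Bochner_Integration.integral_diff)
  also have "\<dots> = (\<integral>x. (\<integral>y. f y \<partial>N x) \<partial>M)"
    using AE_eq outer_meas borel_measurable_integrable[OF Bochner_Integration.integrable_diff[OF pos(2) neg(2)]]
    by (intro integral_cong_AE) auto
  finally show "(\<integral>y. f y \<partial>(M \<bind> N)) = (\<integral>x. (\<integral>y. f y \<partial>N x) \<partial>M)" .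
qed

lemma wass_self: "wass \<mu> \<mu> = 0"
  by (simp add: wass_def SUP_constant bot_ennreal)

lemma lipschitz_integral_diff_le_wass:
  fixes g :: "'x::metric_space \<Rightarrow> real"
  assumes \<alpha>: "prob_space \<alpha>" and \<beta>: "prob_space \<beta>"
    and g: "L-lipschitz_on UNIV g" and int: "integrable \<alpha> g" "integrable \<beta> g"
  shows "ennreal \<bar>(\<integral>x. g x \<partial>\<alpha>) - (\<integral>x. g x \<partial>\<beta>)\<bar> \<le> ennreal L * wass \<alpha> \<beta>"
proof (cases "L = 0")
  case True
  then have "g = (\<lambda>_. g undefined)" using g lipschitz_on_zero_constant by blast
  then have "(\<integral>x. g x \<partial>\<alpha>) = (\<integral>x. g x \<partial>\<beta>)"
    using prob_space.prob_space[OF \<alpha>] prob_space.prob_space[OF \<beta>] by (metis lebesgue_integral_const scaleR_one)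
  then show ?thesis by simp
next
  case False
  then have L: "0 < L" using lipschitz_on_nonneg[OF g] by simp
  define h where "h x = (1 / L) * g x" for x
  have "(1 / L * L)-lipschitz_on UNIV h"
    unfolding h_def using L by (intro lipschitz_on_cmult_real_nonneg g) simp
  then have "1-lipschitz_on UNIV h" using L by simp
  moreover have "integrable \<alpha> h" "integrable \<beta> h" unfolding h_def using int by auto
  ultimately have "ennreal \<bar>(\<integral>x. h x \<partial>\<alpha>) - (\<integral>x. h x \<partial>\<beta>)\<bar> \<le> wass \<alpha> \<beta>"
    unfolding wass_def by (intro SUP_upper) auto
  moreover have "\<bar>(\<integral>x. g x \<partial>\<alpha>) - (\<integral>x. g x \<partial>\<beta>)\<bar> = L * \<bar>(\<integral>x. h x \<partial>\<alpha>) - (\<integral>x. h x \<partial>\<beta>)\<bar>"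
    using L by (simp add: h_def diff_divide_distrib[symmetric] abs_div)
  ultimately show ?thesis using L by (simp add: ennreal_mult mult_left_mono)
qed

lemma dist_min_abs_le: "\<bar>min (\<bar>a\<bar>) c - min (\<bar>b\<bar>) c\<bar> \<le> \<bar>a - b :: real\<bar>"
  by (simp add: min_def abs_if)

lemma SUP_ennreal_min_abs: "(SUP n. ennreal (min \<bar>a\<bar> (real n))) = ennreal \<bar>a\<bar>"
proof (rule antisym)
  show "(SUP n. ennreal (min \<bar>a\<bar> (real n))) \<le> ennreal \<bar>a\<bar>"
    by (rule SUP_least) (simp add: ennreal_leI)
  have "min \<bar>a\<bar> (real (nat \<lceil>\<bar>a\<bar>\<rceil>)) = \<bar>a\<bar>"
    using real_nat_ceiling_ge[of "\<bar>a\<bar>"] by simp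
  then show "ennreal \<bar>a\<bar> \<le> (SUP n. ennreal (min \<bar>a\<bar> (real n)))"
    by (intro SUP_upper2[of "nat \<lceil>\<bar>a\<bar>\<rceil>"]) auto
qed

lemma nn_integral_lipschitz_le_wass:
  fixes h :: "'x::metric_space \<Rightarrow> real"
  assumes \<alpha>: "prob_space \<alpha>" and \<beta>: "prob_space \<beta>" and h: "L-lipschitz_on UNIV h"
    and int: "integrable \<alpha> h" "integrable \<beta> h" and nonneg: "\<And>x. 0 \<le> h x"
  shows "(\<integral>\<^sup>+x. h x \<partial>\<beta>) \<le> (\<integral>\<^sup>+x. h x \<partial>\<alpha>) + ennreal L * wass \<alpha> \<beta>"
proof -
  have "(\<integral>\<^sup>+x. h x \<partial>\<beta>) = ennreal (\<integral>x. h x \<partial>\<beta>)"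
    using int nonneg by (simp add: nn_integral_eq_integral)
  also have "\<dots> \<le> ennreal (\<integral>x. h x \<partial>\<alpha>) + ennreal \<bar>(\<integral>x. h x \<partial>\<alpha>) - (\<integral>x. h x \<partial>\<beta>)\<bar>"
    using nonneg by (simp add: integral_nonneg_AE ennreal_plus[symmetric] del: ennreal_plus)
  also have "\<dots> \<le> (\<integral>\<^sup>+x. h x \<partial>\<alpha>) + ennreal L * wass \<alpha> \<beta>"
  proof (rule add_mono)
    show "ennreal (\<integral>x. h x \<partial>\<alpha>) \<le> (\<integral>\<^sup>+x. h x \<partial>\<alpha>)"
      using int nonneg by (simp add: nn_integral_eq_integral)
    show "ennreal \<bar>(\<integral>x. h x \<partial>\<alpha>) - (\<integral>x. h x \<partial>\<beta>)\<bar> \<le> ennreal L * wass \<alpha> \<beta>"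
      by (rule lipschitz_integral_diff_le_wass[OF \<alpha> \<beta> h int])
  qed
  finally show ?thesis .
qed

lemma nn_integral_abs_le_wass:
  fixes g :: "'x::metric_space \<Rightarrow> real"
  assumes \<alpha>: "prob_space \<alpha>" "sets \<alpha> = sets borel" and \<beta>: "prob_space \<beta>" "sets \<beta> = sets borel"
    and g: "L-lipschitz_on UNIV g"
  shows "(\<integral>\<^sup>+x. ennreal \<bar>g x\<bar> \<partial>\<beta>) \<le> (\<integral>\<^sup>+x. ennreal \<bar>g x\<bar> \<partial>\<alpha>) + ennreal L * wass \<alpha> \<beta>"
proof -
  \<comment> \<open>\<open>wass\<close> only tests functions integrable under both measures, hence the bounded truncations.\<close>
  define h where "h n x = min \<bar>g x\<bar> (real n)" for n x
  have h_lip: "L-lipschitz_on UNIV (h n)" for n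
  proof (rule lipschitz_onI)
    fix x y :: 'x
    have "dist (h n x) (h n y) \<le> dist (g x) (g y)"
      unfolding h_def dist_real_def by (rule dist_min_abs_le)
    then show "dist (h n x) (h n y) \<le> L * dist x y"
      using lipschitz_onD[OF g, of x y] by simp
  qed (rule lipschitz_on_nonneg[OF g])
  have h_meas: "h n \<in> borel_measurable \<alpha>" "h n \<in> borel_measurable \<beta>" for n
    using lipschitz_borel_measurable[OF h_lip] \<alpha>(2) \<beta>(2) by auto
  have h_int: "integrable \<alpha> (h n)" "integrable \<beta> (h n)" for n
    using finite_measure.integrable_const_bound[OF prob_space.finite_measure[OF \<alpha>(1)], of "h n" "real n"]
      finite_measure.integrable_const_bound[OF prob_space.finite_measure[OF \<beta>(1)], of "h n" "real n"]
    by (auto simp: h_def h_meas)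
  have h_nonneg: "0 \<le> h n x" for n x by (simp add: h_def)
  have "(\<integral>\<^sup>+x. ennreal (h n x) \<partial>\<beta>) \<le> (\<integral>\<^sup>+x. ennreal \<bar>g x\<bar> \<partial>\<alpha>) + ennreal L * wass \<alpha> \<beta>" for n
  proof -
    have "(\<integral>\<^sup>+x. h n x \<partial>\<beta>) \<le> (\<integral>\<^sup>+x. h n x \<partial>\<alpha>) + ennreal L * wass \<alpha> \<beta>"
      by (rule nn_integral_lipschitz_le_wass[OF \<alpha>(1) \<beta>(1) h_lip h_int h_nonneg])
    moreover have "(\<integral>\<^sup>+x. h n x \<partial>\<alpha>) \<le> (\<integral>\<^sup>+x. ennreal \<bar>g x\<bar> \<partial>\<alpha>)"
      by (intro nn_integral_mono) (simp add: h_def ennreal_leI)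
    ultimately show ?thesis by (meson add_right_mono order_trans)
  qed
  then have "(SUP n. (\<integral>\<^sup>+x. ennreal (h n x) \<partial>\<beta>)) \<le> (\<integral>\<^sup>+x. ennreal \<bar>g x\<bar> \<partial>\<alpha>) + ennreal L * wass \<alpha> \<beta>"
    by (rule SUP_least)
  moreover have "(\<integral>\<^sup>+x. ennreal \<bar>g x\<bar> \<partial>\<beta>) = (SUP n. (\<integral>\<^sup>+x. ennreal (h n x) \<partial>\<beta>))"
  proof -
    have "(\<integral>\<^sup>+x. ennreal \<bar>g x\<bar> \<partial>\<beta>) = (\<integral>\<^sup>+x. (SUP n. ennreal (h n x)) \<partial>\<beta>)"
      by (simp add: h_def SUP_ennreal_min_abs)
    also have "\<dots> = (SUP n. (\<integral>\<^sup>+x. ennreal (h n x) \<partial>\<beta>))"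
      using h_meas(2) by (intro nn_integral_monotone_convergence_SUP)
        (auto simp: incseq_def le_fun_def h_def[abs_def] intro!: ennreal_leI)
    finally show ?thesis .
  qed
  ultimately show ?thesis by simp
qed

lemma wass_finite_integrable:
  fixes g :: "'x::metric_space \<Rightarrow> real"
  assumes \<alpha>: "prob_space \<alpha>" "sets \<alpha> = sets borel" and \<beta>: "prob_space \<beta>" "sets \<beta> = sets borel"
    and g: "L-lipschitz_on UNIV g" and int: "integrable \<alpha> g" and fin: "wass \<alpha> \<beta> \<noteq> \<top>"
  shows "integrable \<beta> g"
proof -
  have "(\<integral>\<^sup>+x. ennreal \<bar>g x\<bar> \<partial>\<beta>) \<le> (\<integral>\<^sup>+x. ennreal \<bar>g x\<bar> \<partial>\<alpha>) + ennreal L * wass \<alpha> \<beta>"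
    by (rule nn_integral_abs_le_wass[OF \<alpha> \<beta> g])
  also have "\<dots> < \<top>"
    using int fin unfolding integrable_iff_bounded by (simp add: ennreal_mult_less_top less_top)
  finally show ?thesis
    unfolding integrable_iff_bounded using lipschitz_borel_measurable[OF g \<beta>(2)] by simp
qed

lemma lipschitz_integral_diff_le_wass':
  fixes g :: "'x::metric_space \<Rightarrow> real"
  assumes \<alpha>: "prob_space \<alpha>" "sets \<alpha> = sets borel" and \<beta>: "prob_space \<beta>" "sets \<beta> = sets borel"
    and g: "L-lipschitz_on UNIV g" and int: "integrable \<alpha> g"
  shows "ennreal \<bar>(\<integral>x. g x \<partial>\<alpha>) - (\<integral>x. g x \<partial>\<beta>)\<bar> \<le> ennreal L * wass \<alpha> \<beta>"
proof (cases "L = 0 \<or> wass \<alpha> \<beta> \<noteq> \<top>")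
  case True
  have "integrable \<beta> g"
  proof (cases "L = 0")
    case True
    then have "g = (\<lambda>_. g undefined)" using g lipschitz_on_zero_constant by blast
    then show ?thesis using finite_measure.integrable_const[OF prob_space.finite_measure[OF \<beta>(1)]] by metis
  next
    case False
    then show ?thesis using True wass_finite_integrable[OF \<alpha> \<beta> g int] by auto
  qed
  then show ?thesis by (rule lipschitz_integral_diff_le_wass[OF \<alpha>(1) \<beta>(1) g int])
next
  case False
  then have "0 < L" using lipschitz_on_nonneg[OF g] by auto
  then show ?thesis using False by (simp add: ennreal_mult_top)
qed

lemma prob_kernelD:
  assumes "K \<in> M \<rightarrow>\<^sub>M prob_algebra N" "s \<in> space M"
  shows "prob_space (K s)" and "sets (K s) = sets N"
  using measurable_space[OF assms] by (simp_all add: space_prob_algebra)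

lemma
  assumes "(\<lambda>(s, a). p s a) \<in> borel \<Otimes>\<^sub>M borel \<rightarrow>\<^sub>M prob_algebra borel"
  shows config_section_kernel: "p s \<in> borel \<rightarrow>\<^sub>M prob_algebra borel"
    and prob_space_config: "prob_space (p s a)"
    and sets_config: "sets (p s a) = sets borel"
proof -
  show p_s: "p s \<in> borel \<rightarrow>\<^sub>M prob_algebra borel"
    using measurable_Pair2[OF assms, of s] by simp
  show "prob_space (p s a)" "sets (p s a) = sets borel"
    using prob_kernelD[OF p_s, of a] by simp_all
qed

lemma state_kernel_prob_kernel:
  assumes "(\<lambda>(s, a). p s a) \<in> borel \<Otimes>\<^sub>M borel \<rightarrow>\<^sub>M prob_algebra borel"
    and "\<pi> \<in> borel \<rightarrow>\<^sub>M prob_algebra borel"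
  shows "state_kernel p \<pi> \<in> borel \<rightarrow>\<^sub>M prob_algebra borel"
  using measurable_bind_prob_space2[OF assms(2,1)] unfolding state_kernel_def[abs_def] by simp

context
  fixes p :: "'s::metric_space \<Rightarrow> 'a::metric_space \<Rightarrow> 's measure" and \<pi> :: "'s \<Rightarrow> 'a measure"
  assumes p_kernel: "(\<lambda>(s, a). p s a) \<in> borel \<Otimes>\<^sub>M borel \<rightarrow>\<^sub>M prob_algebra borel"
    and pi_kernel: "\<pi> \<in> borel \<rightarrow>\<^sub>M prob_algebra borel"
begin

lemma
  fixes f :: "'s \<Rightarrow> real"
  assumes f: "L-lipschitz_on UNIV f" and int: "integrable (state_kernel p \<pi> s) f"
  shows AE_integrable_config: "AE a in \<pi> s. integrable (p s a) f"
    and integrable_integral_config: "integrable (\<pi> s) (\<lambda>a. \<integral>y. f y \<partial>p s a)"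
    and integral_state_kernel: "(\<integral>y. f y \<partial>state_kernel p \<pi> s) = (\<integral>a. (\<integral>y. f y \<partial>p s a) \<partial>\<pi> s)"
proof -
  have "p s \<in> \<pi> s \<rightarrow>\<^sub>M subprob_algebra borel"
    using measurable_prob_algebraD[OF config_section_kernel[OF p_kernel]] prob_kernelD(2)[OF pi_kernel]
    by (simp cong: measurable_cong_sets)
  note bind = this lipschitz_borel_measurable[OF f refl] int[unfolded state_kernel_def]
  show "AE a in \<pi> s. integrable (p s a) f" by (rule AE_integrable_bind_kernel[OF bind])
  show "integrable (\<pi> s) (\<lambda>a. \<integral>y. f y \<partial>p s a)" by (rule integrable_integral_bind_kernel[OF bind])
  show "(\<integral>y. f y \<partial>state_kernel p \<pi> s) = (\<integral>a. (\<integral>y. f y \<partial>p s a) \<partial>\<pi> s)"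
    unfolding state_kernel_def by (rule integral_bind_kernel[OF bind])
qed

lemma integrable_config_if_integrable_state_kernel:
  fixes f :: "'s \<Rightarrow> real"
  assumes p_LC: "config_LC L\<^sub>p p"
    and f: "L-lipschitz_on UNIV f" and int: "integrable (state_kernel p \<pi> s) f"
  shows "integrable (p s' a') f"
proof -
  have "\<exists>a\<in>space (\<pi> s). integrable (p s a) f"
    by (rule prob_space.AE_imp_ex_in_space[OF prob_kernelD(1)[OF pi_kernel] AE_integrable_config[OF f int]])
      simp
  then obtain a where "integrable (p s a) f" by blast
  moreover have "wass (p s a) (p s' a') \<noteq> \<top>"
    using p_LC unfolding config_LC_def by (metis ennreal_neq_top neq_top_trans)
  ultimately show ?thesis
    using wass_finite_integrable[OF prob_space_config[OF p_kernel] sets_config[OF p_kernel]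
        prob_space_config[OF p_kernel] sets_config[OF p_kernel] f] by blast
qed

lemma integral_config_dist_le:
  fixes f :: "'s \<Rightarrow> real"
  assumes L\<^sub>p: "0 \<le> L\<^sub>p" and p_LC: "config_LC L\<^sub>p p"
    and f: "1-lipschitz_on UNIV f" and int: "integrable (state_kernel p \<pi> s) f"
  shows "\<bar>(\<integral>y. f y \<partial>p x a) - (\<integral>y. f y \<partial>p x' a')\<bar> \<le> L\<^sub>p * (dist x x' + dist a a')"
proof -
  note int_config = integrable_config_if_integrable_state_kernel[OF p_LC f int]
  have "ennreal \<bar>(\<integral>y. f y \<partial>p x a) - (\<integral>y. f y \<partial>p x' a')\<bar> \<le> ennreal 1 * wass (p x a) (p x' a')"
    using prob_space_config[OF p_kernel] int_config by (intro lipschitz_integral_diff_le_wass f)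
  also have "\<dots> \<le> ennreal (L\<^sub>p * (dist x x' + dist a a'))"
    using p_LC unfolding config_LC_def by simp
  finally show ?thesis by (rule ennreal_le_iff[THEN iffD1, rotated]) (simp add: L\<^sub>p)
qed

lemma state_kernel_lipschitz:
  assumes L\<^sub>p: "0 \<le> L\<^sub>p" and L\<^sub>\<pi>: "0 \<le> L\<^sub>\<pi>"
    and pi_LC: "policy_LC L\<^sub>\<pi> \<pi>" and p_LC: "config_LC L\<^sub>p p"
  shows "wass (state_kernel p \<pi> s) (state_kernel p \<pi> s') \<le> ennreal (L\<^sub>p * (1 + L\<^sub>\<pi>) * dist s s')"
  unfolding wass_def
proof (rule SUP_least, safe)
  fix f :: "'s \<Rightarrow> real"
  assume f: "1-lipschitz_on UNIV f" and int: "integrable (state_kernel p \<pi> s) f"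
    and int': "integrable (state_kernel p \<pi> s') f"
  note prob_\<pi> = prob_kernelD[OF pi_kernel, simplified]
  define g where "g x a = (\<integral>y. f y \<partial>p x a)" for x a
  have g_dist: "\<bar>g x a - g x' a'\<bar> \<le> L\<^sub>p * (dist x x' + dist a a')" for x x' a a'
    unfolding g_def by (rule integral_config_dist_le[OF L\<^sub>p p_LC f int])
  have g_lip: "L\<^sub>p-lipschitz_on UNIV (g x)" for x
    using g_dist[of x _ x] L\<^sub>p by (intro lipschitz_onI) (auto simp: dist_real_def)
  have int_s: "integrable (\<pi> s) (g s)" and int_s': "integrable (\<pi> s') (g s')"
    unfolding g_def using integrable_integral_config[OF f] int int' by auto
  have int_s_s': "integrable (\<pi> s) (g s')"
    using pi_LC unfolding policy_LC_def
    by (intro wass_finite_integrable[OF prob_\<pi> prob_\<pi> g_lip int_s'])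
      (metis ennreal_neq_top neq_top_trans)
  have "\<bar>(\<integral>a. g s a \<partial>\<pi> s) - (\<integral>a. g s' a \<partial>\<pi> s)\<bar> \<le> (\<integral>a. \<bar>g s a - g s' a\<bar> \<partial>\<pi> s)"
    using int_s int_s_s' by (simp flip: Bochner_Integration.integral_diff add: integral_abs_bound)
  also have "\<dots> \<le> (\<integral>a. L\<^sub>p * dist s s' \<partial>\<pi> s)"
    using int_s int_s_s' prob_space.finite_measure[OF prob_\<pi>(1)] g_dist[of s a s' a for a]
    by (intro integral_mono) (auto simp: finite_measure.integrable_const)
  also have "\<dots> = L\<^sub>p * dist s s'"
    using prob_space.prob_space[OF prob_\<pi>(1)] by simp
  finally have moved_state: "\<bar>(\<integral>a. g s a \<partial>\<pi> s) - (\<integral>a. g s' a \<partial>\<pi> s)\<bar> \<le> L\<^sub>p * dist s s'" .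
  have "ennreal \<bar>(\<integral>a. g s' a \<partial>\<pi> s) - (\<integral>a. g s' a \<partial>\<pi> s')\<bar> \<le> ennreal L\<^sub>p * wass (\<pi> s) (\<pi> s')"
    by (rule lipschitz_integral_diff_le_wass[OF prob_\<pi>(1) prob_\<pi>(1) g_lip int_s_s' int_s'])
  also have "\<dots> \<le> ennreal L\<^sub>p * ennreal (L\<^sub>\<pi> * dist s s')"
    using pi_LC unfolding policy_LC_def by (intro mult_left_mono) auto
  finally have moved_action: "\<bar>(\<integral>a. g s' a \<partial>\<pi> s) - (\<integral>a. g s' a \<partial>\<pi> s')\<bar> \<le> L\<^sub>p * (L\<^sub>\<pi> * dist s s')"
    using L\<^sub>p L\<^sub>\<pi> by (simp add: ennreal_mult[symmetric])
  have "\<bar>(\<integral>y. f y \<partial>state_kernel p \<pi> s) - (\<integral>y. f y \<partial>state_kernel p \<pi> s')\<bar>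
      = \<bar>(\<integral>a. g s a \<partial>\<pi> s) - (\<integral>a. g s' a \<partial>\<pi> s')\<bar>"
    unfolding g_def using integral_state_kernel[OF f] int int' by simp
  also have "\<dots> \<le> L\<^sub>p * (1 + L\<^sub>\<pi>) * dist s s'"
    using moved_state moved_action by (simp add: algebra_simps)
  finally show "ennreal \<bar>(\<integral>y. f y \<partial>state_kernel p \<pi> s) - (\<integral>y. f y \<partial>state_kernel p \<pi> s')\<bar>
      \<le> ennreal (L\<^sub>p * (1 + L\<^sub>\<pi>) * dist s s')" by (rule ennreal_leI)
qed

end

definition discount_measure :: "real \<Rightarrow> nat measure" where
  "discount_measure \<gamma> = density (count_space UNIV) (\<lambda>t. ennreal ((1 - \<gamma>) * \<gamma> ^ t))"

lemma space_discount_measure[simp]: "space (discount_measure \<gamma>) = UNIV"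
  by (simp add: discount_measure_def)

lemma state_dist_prob:
  assumes rho: "\<rho> \<in> space (prob_algebra borel)" and P: "P \<in> borel \<rightarrow>\<^sub>M prob_algebra borel"
  shows "state_dist \<rho> P t \<in> space (prob_algebra borel)"
proof (induction t)
  case 0
  then show ?case using rho by simp
next
  case (Suc t)
  then show ?case using prob_space_bind'[OF Suc P] sets_bind'[OF Suc P]
    by (simp add: space_prob_algebra)
qed

context
  fixes \<rho> :: "'s::metric_space measure" and P :: "'s \<Rightarrow> 's measure"
  assumes rho: "\<rho> \<in> space (prob_algebra borel)" and P_kernel: "P \<in> borel \<rightarrow>\<^sub>M prob_algebra borel"
begin

lemma state_dist_subprob_kernel: "state_dist \<rho> P \<in> discount_measure \<gamma> \<rightarrow>\<^sub>M subprob_algebra borel"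
proof -
  have "state_dist \<rho> P \<in> count_space UNIV \<rightarrow>\<^sub>M subprob_algebra borel"
    using state_dist_prob[OF rho P_kernel]
    by (auto simp: space_prob_algebra space_subprob_algebra prob_space_imp_subprob_space)
  then show ?thesis unfolding discount_measure_def by (simp cong: measurable_cong_sets)
qed

lemma disc_dist_eq_bind: "disc_dist \<gamma> \<rho> P = discount_measure \<gamma> \<bind> state_dist \<rho> P"
proof -
  let ?B = "discount_measure \<gamma> \<bind> state_dist \<rho> P"
  have sets_B: "sets ?B = sets borel"
    by (rule sets_bind_measurable[OF state_dist_subprob_kernel]) simp
  have sets_rho: "sets \<rho> = sets borel" using rho by (simp add: space_prob_algebra)
  have emeasure_B: "emeasure ?B X = (\<Sum>t. ennreal ((1 - \<gamma>) * \<gamma> ^ t) * emeasure (state_dist \<rho> P t) X)"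
    if "X \<in> sets borel" for X
  proof -
    have "emeasure ?B X = (\<integral>\<^sup>+t. emeasure (state_dist \<rho> P t) X \<partial>discount_measure \<gamma>)"
      by (rule emeasure_bind[OF _ state_dist_subprob_kernel that]) simp
    also have "\<dots> = (\<Sum>t. ennreal ((1 - \<gamma>) * \<gamma> ^ t) * emeasure (state_dist \<rho> P t) X)"
      unfolding discount_measure_def by (simp add: nn_integral_density nn_integral_count_space_nat)
    finally show ?thesis .
  qed
  have "disc_dist \<gamma> \<rho> P = measure_of (space ?B) (sets ?B) (emeasure ?B)"
    unfolding disc_dist_def sets_B sets_rho sets_eq_imp_space_eq[OF sets_B] sets_eq_imp_space_eq[OF sets_rho]
    by (rule measure_of_eq) (auto simp: emeasure_B sets.sigma_sets_eq[of borel, simplified])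
  then show ?thesis by (simp add: measure_of_of_measure)
qed

lemma nn_integral_disc_dist:
  assumes "g \<in> borel_measurable borel"
  shows "(\<integral>\<^sup>+x. g x \<partial>disc_dist \<gamma> \<rho> P)
    = (\<Sum>t. ennreal ((1 - \<gamma>) * \<gamma> ^ t) * (\<integral>\<^sup>+x. g x \<partial>state_dist \<rho> P t))"
  unfolding disc_dist_eq_bind nn_integral_bind[OF assms state_dist_subprob_kernel]
  unfolding discount_measure_def by (simp add: nn_integral_density nn_integral_count_space_nat)

lemma
  fixes f :: "'s \<Rightarrow> real"
  assumes f: "f \<in> borel_measurable borel" and \<gamma>: "0 < \<gamma>" "\<gamma> < 1"
    and int: "integrable (disc_dist \<gamma> \<rho> P) f"
  shows integrable_state_dist_if_disc_dist: "integrable (state_dist \<rho> P t) f"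
    and summable_integral_state_dist:
      "summable (\<lambda>t. norm ((1 - \<gamma>) * \<gamma> ^ t * (\<integral>x. f x \<partial>state_dist \<rho> P t)))"
    and integral_disc_dist:
      "(\<integral>x. f x \<partial>disc_dist \<gamma> \<rho> P) = (\<Sum>t. (1 - \<gamma>) * \<gamma> ^ t * (\<integral>x. f x \<partial>state_dist \<rho> P t))"
proof -
  note bind = state_dist_subprob_kernel f int[unfolded disc_dist_eq_bind]
  have "AE t in count_space UNIV. 0 < ennreal ((1 - \<gamma>) * \<gamma> ^ t) \<longrightarrow> integrable (state_dist \<rho> P t) f"
    using AE_integrable_bind_kernel[OF bind] unfolding discount_measure_def by (subst (asm) AE_density) simp_all
  then show "integrable (state_dist \<rho> P t) f" using \<gamma> by (simp add: AE_count_space)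
  have weighted: "integrable (count_space UNIV) (\<lambda>t. ((1 - \<gamma>) * \<gamma> ^ t) *\<^sub>R (\<integral>x. f x \<partial>state_dist \<rho> P t))"
    using integrable_integral_bind_kernel[OF bind] \<gamma> unfolding discount_measure_def
    by (subst (asm) integrable_density) simp_all
  then show "summable (\<lambda>t. norm ((1 - \<gamma>) * \<gamma> ^ t * (\<integral>x. f x \<partial>state_dist \<rho> P t)))"
    by (simp add: integrable_count_space_nat_iff)
  have "(\<integral>x. f x \<partial>disc_dist \<gamma> \<rho> P) = (\<integral>t. (\<integral>x. f x \<partial>state_dist \<rho> P t) \<partial>discount_measure \<gamma>)"
    unfolding disc_dist_eq_bind by (rule integral_bind_kernel[OF bind])
  also have "\<dots> = (\<integral>t. ((1 - \<gamma>) * \<gamma> ^ t) *\<^sub>R (\<integral>x. f x \<partial>state_dist \<rho> P t) \<partial>count_space UNIV)"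
    unfolding discount_measure_def using \<gamma> by (subst integral_density) simp_all
  also have "\<dots> = (\<Sum>t. (1 - \<gamma>) * \<gamma> ^ t * (\<integral>x. f x \<partial>state_dist \<rho> P t))"
    using integral_count_space_nat[OF weighted] by simp
  finally show "(\<integral>x. f x \<partial>disc_dist \<gamma> \<rho> P) = (\<Sum>t. (1 - \<gamma>) * \<gamma> ^ t * (\<integral>x. f x \<partial>state_dist \<rho> P t))" .
qed

end

lemma disc_dist_zero: "disc_dist 0 \<rho> P = \<rho>"
proof -
  have "(\<Sum>t. ennreal ((1 - 0) * (0::real) ^ t) * emeasure (state_dist \<rho> P t) A) = emeasure \<rho> A" for A
    by (subst suminf_finite[of "{0}"]) auto
  then show ?thesis unfolding disc_dist_def by (simp add: measure_of_of_measure)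
qed

lemma sums_discounted_convolution:
  fixes a :: "nat \<Rightarrow> real"
  assumes \<gamma>: "0 \<le> \<gamma>" and K: "0 \<le> K" "\<gamma> * K < 1"
    and a: "summable (\<lambda>t. norm ((1 - \<gamma>) * \<gamma> ^ t * a t))"
  shows "(\<lambda>t. (1 - \<gamma>) * \<gamma> ^ t * (\<Sum>k<t. K ^ (t - 1 - k) * a k))
    sums (\<gamma> / (1 - \<gamma> * K) * (\<Sum>t. (1 - \<gamma>) * \<gamma> ^ t * a t))"
proof -
  define c where "c t = (1 - \<gamma>) * \<gamma> ^ t * a t" for t
  define b where "b m = \<gamma> * (\<gamma> * K) ^ m" for m
  have "norm (\<gamma> * K) < 1" using \<gamma> K by simp
  then have b: "b sums (\<gamma> / (1 - \<gamma> * K))"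
    unfolding b_def using sums_mult[OF geometric_sums, of "\<gamma> * K" \<gamma>] by simp
  have "norm (b m) = b m" for m
    using \<gamma> K by (simp add: b_def)
  then have "summable (\<lambda>m. norm (b m))" using sums_summable[OF b] by simp
  then have "(\<lambda>n. \<Sum>i\<le>n. c i * b (n - i)) sums ((\<Sum>t. c t) * (\<Sum>m. b m))"
    using a unfolding c_def by (intro Cauchy_product_sums)
  also have "(\<Sum>t. c t) * (\<Sum>m. b m) = \<gamma> / (1 - \<gamma> * K) * (\<Sum>t. c t)"
    using sums_unique[OF b] by simp
  also have "(\<lambda>n. \<Sum>i\<le>n. c i * b (n - i))
      = (\<lambda>n. (1 - \<gamma>) * \<gamma> ^ Suc n * (\<Sum>k<Suc n. K ^ (Suc n - 1 - k) * a k))"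
  proof
    fix n
    have "c i * b (n - i) = (1 - \<gamma>) * \<gamma> ^ Suc n * (K ^ (Suc n - 1 - i) * a i)" if "i \<le> n" for i
    proof -
      have "\<gamma> ^ Suc n = \<gamma> * (\<gamma> ^ i * \<gamma> ^ (n - i))"
        using that by (simp flip: power_add)
      then show ?thesis
        unfolding c_def b_def power_mult_distrib by (simp only: ac_simps Suc_diff_1 diff_Suc_1)
    qed
    then show "(\<Sum>i\<le>n. c i * b (n - i)) = (1 - \<gamma>) * \<gamma> ^ Suc n * (\<Sum>k<Suc n. K ^ (Suc n - 1 - k) * a k)"
      unfolding sum_distrib_left lessThan_Suc_atMost by (intro sum.cong) auto
  qed
  finally show ?thesis unfolding c_def by (subst (asm) sums_Suc_iff) simp
qed

lemma abs_suminf_diff_le: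
  fixes a b e :: "nat \<Rightarrow> real"
  assumes a: "summable a" and b: "summable b" and le: "\<And>t. \<bar>a t - b t\<bar> \<le> e t" and e: "e sums E"
  shows "\<bar>suminf a - suminf b\<bar> \<le> E"
proof -
  have summable_abs: "summable (\<lambda>t. \<bar>a t - b t\<bar>)"
    using le by (intro summable_comparison_test'[OF sums_summable[OF e], of 0]) simp
  have "\<bar>suminf a - suminf b\<bar> = \<bar>\<Sum>t. a t - b t\<bar>"
    by (simp only: suminf_diff[OF a b])
  also have "\<dots> \<le> (\<Sum>t. \<bar>a t - b t\<bar>)" by (rule summable_rabs[OF summable_abs])
  also have "\<dots> \<le> (\<Sum>t. e t)" by (rule suminf_le[OF le summable_abs sums_summable[OF e]])
  also have "\<dots> = E" by (rule sums_unique[OF e, symmetric])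
  finally show ?thesis .
qed

primrec kernel_pow :: "('s \<Rightarrow> 's measure) \<Rightarrow> nat \<Rightarrow> ('s \<Rightarrow> real) \<Rightarrow> 's \<Rightarrow> real" where
  "kernel_pow Q 0 g = g"
| "kernel_pow Q (Suc j) g = (\<lambda>s. \<integral>x. kernel_pow Q j g x \<partial>Q s)"

lemma kernel_pow_nonneg: "(\<And>x. 0 \<le> g x) \<Longrightarrow> 0 \<le> kernel_pow Q j g s"
  by (induction j arbitrary: s) auto

locale kernel_comparison =
  fixes \<rho> :: "'s::metric_space measure" and Q P :: "'s \<Rightarrow> 's measure" and K :: real
  assumes rho: "\<rho> \<in> space (prob_algebra borel)"
    and Q_kernel: "Q \<in> borel \<rightarrow>\<^sub>M prob_algebra borel"
    and P_kernel: "P \<in> borel \<rightarrow>\<^sub>M prob_algebra borel"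
    and K_nonneg: "0 \<le> K"
    and Q_lipschitz: "\<And>s s'. wass (Q s) (Q s') \<le> ennreal (K * dist s s')"
    and gap_measurable: "(\<lambda>s. wass (Q s) (P s)) \<in> borel_measurable borel"
begin

abbreviation "Pdist \<equiv> state_dist \<rho> P"
abbreviation "Qdist \<equiv> state_dist \<rho> Q"

definition gap :: "nat \<Rightarrow> real" where
  "gap k = enn2real (\<integral>\<^sup>+s. wass (Q s) (P s) \<partial>Pdist k)"

lemma prob_Q: "prob_space (Q s)" "sets (Q s) = sets borel"
  and prob_P: "prob_space (P s)" "sets (P s) = sets borel"
  using prob_kernelD[OF Q_kernel] prob_kernelD[OF P_kernel] by auto

lemma prob_Pdist: "prob_space (Pdist k)" "sets (Pdist k) = sets borel"
  and prob_Qdist: "prob_space (Qdist k)" "sets (Qdist k) = sets borel"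
  using state_dist_prob[OF rho P_kernel, of k] state_dist_prob[OF rho Q_kernel, of k]
  by (auto simp: space_prob_algebra)

lemma Q_subprob_kernel: "sets M = sets borel \<Longrightarrow> Q \<in> M \<rightarrow>\<^sub>M subprob_algebra borel"
  and P_subprob_kernel: "sets M = sets borel \<Longrightarrow> P \<in> M \<rightarrow>\<^sub>M subprob_algebra borel"
  using measurable_prob_algebraD[OF Q_kernel] measurable_prob_algebraD[OF P_kernel]
  by (simp_all cong: measurable_cong_sets)

lemma integrable_Q_if_integrable_Qdist1:
  fixes h :: "'s \<Rightarrow> real"
  assumes h: "L-lipschitz_on UNIV h" and int: "integrable (Qdist (Suc 0)) h"
  shows "integrable (Q s) h"
proof -
  have "AE x in Qdist 0. integrable (Q x) h"
    using AE_integrable_bind_kernel[OF Q_subprob_kernel[OF prob_Qdist(2)]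
        lipschitz_borel_measurable[OF h refl] int[unfolded state_dist.simps(2)]] .
  then obtain s\<^sub>0 where "integrable (Q s\<^sub>0) h"
    using prob_space.AE_imp_ex_in_space[OF prob_Qdist(1)] by blast
  moreover have "wass (Q s\<^sub>0) (Q s) \<noteq> \<top>"
    using Q_lipschitz by (metis ennreal_neq_top neq_top_trans)
  ultimately show ?thesis using wass_finite_integrable[OF prob_Q prob_Q h] by blast
qed

lemma kernel_pow_Qdist:
  assumes g: "1-lipschitz_on UNIV g" and int: "\<And>i. integrable (Qdist i) g"
  shows "(K ^ j)-lipschitz_on UNIV (kernel_pow Q j g)
    \<and> (\<forall>i. integrable (Qdist i) (kernel_pow Q j g)
        \<and> (\<integral>x. kernel_pow Q j g x \<partial>Qdist i) = (\<integral>x. g x \<partial>Qdist (i + j)))"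
proof (induction j)
  case 0
  then show ?case using g int by simp
next
  case (Suc j)
  let ?h = "kernel_pow Q j g"
  have h_lip: "(K ^ j)-lipschitz_on UNIV ?h" and h_int: "\<And>i. integrable (Qdist i) ?h"
    and h_integral: "\<And>i. (\<integral>x. ?h x \<partial>Qdist i) = (\<integral>x. g x \<partial>Qdist (i + j))"
    using Suc by auto
  note bind = Q_subprob_kernel[OF prob_Qdist(2)] lipschitz_borel_measurable[OF h_lip refl]
    h_int[of "Suc i" for i, unfolded state_dist.simps(2)]
  have "integrable (Qdist i) (kernel_pow Q (Suc j) g)" for i
    using integrable_integral_bind_kernel[OF bind] by simp
  moreover have "(\<integral>x. kernel_pow Q (Suc j) g x \<partial>Qdist i) = (\<integral>x. g x \<partial>Qdist (i + Suc j))" for i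
    using integral_bind_kernel[OF bind, of i] h_integral[of "Suc i"] by simp
  moreover have "(K ^ Suc j)-lipschitz_on UNIV (kernel_pow Q (Suc j) g)"
  proof (rule lipschitz_onI)
    fix s s' :: 's
    have h_Q: "integrable (Q s) ?h" for s by (rule integrable_Q_if_integrable_Qdist1[OF h_lip h_int])
    have "ennreal \<bar>(\<integral>x. ?h x \<partial>Q s) - (\<integral>x. ?h x \<partial>Q s')\<bar> \<le> ennreal (K ^ j) * wass (Q s) (Q s')"
      by (rule lipschitz_integral_diff_le_wass[OF prob_Q(1) prob_Q(1) h_lip h_Q h_Q])
    also have "\<dots> \<le> ennreal (K ^ j) * ennreal (K * dist s s')"
      by (rule mult_left_mono[OF Q_lipschitz]) simp
    also have "\<dots> = ennreal (K ^ Suc j * dist s s')"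
      using K_nonneg by (simp add: ennreal_mult[symmetric] mult_ac)
    finally show "dist (kernel_pow Q (Suc j) g s) (kernel_pow Q (Suc j) g s') \<le> K ^ Suc j * dist s s'"
      unfolding dist_real_def kernel_pow.simps
      by (rule ennreal_le_iff[THEN iffD1, rotated]) (intro mult_nonneg_nonneg zero_le_power K_nonneg zero_le_dist)
  qed (simp add: K_nonneg)
  ultimately show ?case by simp
qed

lemma
  assumes "1-lipschitz_on UNIV g" and "\<And>i. integrable (Qdist i) g"
  shows lipschitz_kernel_pow: "(K ^ j)-lipschitz_on UNIV (kernel_pow Q j g)"
    and integrable_Qdist_kernel_pow: "integrable (Qdist i) (kernel_pow Q j g)"
    and integral_Qdist_kernel_pow: "(\<integral>x. kernel_pow Q j g x \<partial>Qdist i) = (\<integral>x. g x \<partial>Qdist (i + j))"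
    and integrable_Q_kernel_pow: "integrable (Q s) (kernel_pow Q j g)"
  using kernel_pow_Qdist[OF assms, of j] integrable_Q_if_integrable_Qdist1[of "K ^ j" "kernel_pow Q j g"]
  by blast+

lemma abs_kernel_pow_le:
  assumes g: "1-lipschitz_on UNIV g" and int: "\<And>i. integrable (Qdist i) g"
  shows "\<bar>kernel_pow Q j g s\<bar> \<le> kernel_pow Q j (\<lambda>x. \<bar>g x\<bar>) s"
proof (induction j arbitrary: s)
  case 0
  then show ?case by simp
next
  case (Suc j)
  have abs_int: "integrable (Qdist i) (\<lambda>x. \<bar>g x\<bar>)" for i using int by auto
  have "\<bar>kernel_pow Q (Suc j) g s\<bar> \<le> (\<integral>x. \<bar>kernel_pow Q j g x\<bar> \<partial>Q s)" by simp
  also have "\<dots> \<le> kernel_pow Q (Suc j) (\<lambda>x. \<bar>g x\<bar>) s"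
    using Suc integrable_Q_kernel_pow[OF g int] integrable_Q_kernel_pow[OF lipschitz_on_abs[OF g] abs_int]
    by (auto intro!: integral_mono)
  finally show ?case .
qed

lemma gap_nonneg: "0 \<le> gap k"
  by (simp add: gap_def)

lemma nn_integral_Pdist_Suc_le:
  fixes h :: "'s \<Rightarrow> real"
  assumes h: "L-lipschitz_on UNIV h" and nonneg: "\<And>x. 0 \<le> h x" and int: "\<And>s. integrable (Q s) h"
  shows "(\<integral>\<^sup>+x. h x \<partial>Pdist (Suc k))
    \<le> (\<integral>\<^sup>+s. (\<integral>x. h x \<partial>Q s) \<partial>Pdist k) + ennreal L * (\<integral>\<^sup>+s. wass (Q s) (P s) \<partial>Pdist k)"
proof -
  have h_meas: "h \<in> borel_measurable borel" by (rule lipschitz_borel_measurable[OF h refl])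
  have "(\<lambda>s. \<integral>x. h x \<partial>Q s) \<in> borel_measurable (Pdist k)"
    by (rule measurable_compose[OF Q_subprob_kernel[OF prob_Pdist(2)] integral_measurable_subprob_algebra[OF h_meas]])
  then have Qh_meas: "(\<lambda>s. ennreal (\<integral>x. h x \<partial>Q s)) \<in> borel_measurable (Pdist k)"
    by (rule measurable_compose[OF _ measurable_ennreal])
  have gap_meas: "(\<lambda>s. wass (Q s) (P s)) \<in> borel_measurable (Pdist k)"
    using gap_measurable prob_Pdist(2) by (simp cong: measurable_cong_sets)
  have "(\<integral>\<^sup>+x. h x \<partial>Pdist (Suc k)) = (\<integral>\<^sup>+s. (\<integral>\<^sup>+x. h x \<partial>P s) \<partial>Pdist k)"
    unfolding state_dist.simps(2)
    by (rule nn_integral_bind[OF measurable_compose[OF h_meas measurable_ennreal] P_subprob_kernel[OF prob_Pdist(2)]])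
  also have "\<dots> \<le> (\<integral>\<^sup>+s. ennreal (\<integral>x. h x \<partial>Q s) + ennreal L * wass (Q s) (P s) \<partial>Pdist k)"
  proof (rule nn_integral_mono)
    fix s
    have "(\<integral>\<^sup>+x. ennreal \<bar>h x\<bar> \<partial>P s) \<le> (\<integral>\<^sup>+x. ennreal \<bar>h x\<bar> \<partial>Q s) + ennreal L * wass (Q s) (P s)"
      by (rule nn_integral_abs_le_wass[OF prob_Q prob_P h])
    then show "(\<integral>\<^sup>+x. h x \<partial>P s) \<le> ennreal (\<integral>x. h x \<partial>Q s) + ennreal L * wass (Q s) (P s)"
      using int nonneg by (simp add: nn_integral_eq_integral)
  qed
  also have "\<dots> = (\<integral>\<^sup>+s. (\<integral>x. h x \<partial>Q s) \<partial>Pdist k) + ennreal L * (\<integral>\<^sup>+s. wass (Q s) (P s) \<partial>Pdist k)"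
    using Qh_meas gap_meas by (simp add: nn_integral_add nn_integral_cmult)
  finally show ?thesis .
qed

context
  fixes f :: "'s \<Rightarrow> real"
  assumes f_lip: "1-lipschitz_on UNIV f" and f_int: "\<And>i. integrable (Qdist i) f"
    and gap_finite: "\<And>k. (\<integral>\<^sup>+s. wass (Q s) (P s) \<partial>Pdist k) \<noteq> \<top>"
begin

lemma integrable_Pdist_kernel_pow_abs: "integrable (Pdist k) (kernel_pow Q j (\<lambda>x. \<bar>f x\<bar>))"
proof -
  have abs_lip: "1-lipschitz_on UNIV (\<lambda>x. \<bar>f x\<bar>)" by (rule lipschitz_on_abs[OF f_lip])
  have abs_int: "integrable (Qdist i) (\<lambda>x. \<bar>f x\<bar>)" for i using f_int by auto
  have u_nonneg: "0 \<le> kernel_pow Q j (\<lambda>x. \<bar>f x\<bar>) x" for j x by (rule kernel_pow_nonneg) simp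
  show ?thesis
  proof (induction k arbitrary: j)
    case 0
    show ?case using integrable_Qdist_kernel_pow[OF abs_lip abs_int, of 0 j] by simp
  next
    case (Suc k)
    let ?u = "\<lambda>j. kernel_pow Q j (\<lambda>x. \<bar>f x\<bar>)"
    have "(\<integral>\<^sup>+x. ?u j x \<partial>Pdist (Suc k))
        \<le> (\<integral>\<^sup>+s. ?u (Suc j) s \<partial>Pdist k) + ennreal (K ^ j) * (\<integral>\<^sup>+s. wass (Q s) (P s) \<partial>Pdist k)"
      using nn_integral_Pdist_Suc_le[OF lipschitz_kernel_pow[OF abs_lip abs_int] u_nonneg
          integrable_Q_kernel_pow[OF abs_lip abs_int]]
      by (simp only: kernel_pow.simps)
    also have "\<dots> < \<top>"
    proof -
      have "(\<integral>\<^sup>+s. ?u (Suc j) s \<partial>Pdist k) < \<top>"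
        using Suc.IH[of "Suc j"] unfolding integrable_iff_bounded real_norm_def abs_of_nonneg[OF u_nonneg]
        by (simp add: infinity_ennreal_def)
      moreover have "ennreal (K ^ j) * (\<integral>\<^sup>+s. wass (Q s) (P s) \<partial>Pdist k) < \<top>"
        using gap_finite[of k] by (simp add: ennreal_mult_less_top less_top)
      ultimately show ?thesis by (simp add: less_top)
    qed
    finally show ?case
      using lipschitz_borel_measurable[OF lipschitz_kernel_pow[OF abs_lip abs_int] prob_Pdist(2)] u_nonneg
      by (intro integrableI_nonneg) (auto simp del: state_dist.simps)
  qed
qed

lemma integrable_Pdist_kernel_pow: "integrable (Pdist k) (kernel_pow Q j f)"
proof (rule Bochner_Integration.integrable_bound[OF integrable_Pdist_kernel_pow_abs])
  show "kernel_pow Q j f \<in> borel_measurable (Pdist k)"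
    by (rule lipschitz_borel_measurable[OF lipschitz_kernel_pow[OF f_lip f_int] prob_Pdist(2)])
  show "AE x in Pdist k. norm (kernel_pow Q j f x) \<le> norm (kernel_pow Q j (\<lambda>x. \<bar>f x\<bar>) x)"
    using abs_kernel_pow_le[OF f_lip f_int] by (intro AE_I2) (auto intro: order_trans[OF _ abs_ge_self])
qed

lemma kernel_pow_step_le_gap:
  "\<bar>(\<integral>x. kernel_pow Q (Suc j) f x \<partial>Pdist k) - (\<integral>x. kernel_pow Q j f x \<partial>Pdist (Suc k))\<bar>
    \<le> K ^ j * gap k"
proof -
  let ?h = "kernel_pow Q j f"
  have h_lip: "(K ^ j)-lipschitz_on UNIV ?h" by (rule lipschitz_kernel_pow[OF f_lip f_int])
  note bind = P_subprob_kernel[OF prob_Pdist(2)] lipschitz_borel_measurable[OF h_lip refl]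
    integrable_Pdist_kernel_pow[where k="Suc k" and j=j, unfolded state_dist.simps(2)]
  define d where "d s = (\<integral>x. ?h x \<partial>Q s) - (\<integral>x. ?h x \<partial>P s)" for s
  have d_int: "integrable (Pdist k) d"
    unfolding d_def using integrable_Pdist_kernel_pow[where k=k and j="Suc j"] integrable_integral_bind_kernel[OF bind]
    by simp
  have diff_eq: "(\<integral>x. kernel_pow Q (Suc j) f x \<partial>Pdist k) - (\<integral>x. ?h x \<partial>Pdist (Suc k)) = (\<integral>s. d s \<partial>Pdist k)"
    unfolding d_def state_dist.simps(2) integral_bind_kernel[OF bind]
    using integrable_Pdist_kernel_pow[where k=k and j="Suc j"] integrable_integral_bind_kernel[OF bind] by simp
  have "ennreal \<bar>\<integral>s. d s \<partial>Pdist k\<bar> \<le> ennreal (\<integral>s. \<bar>d s\<bar> \<partial>Pdist k)"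
    by (intro ennreal_leI integral_abs_bound)
  also have "\<dots> = (\<integral>\<^sup>+s. ennreal \<bar>d s\<bar> \<partial>Pdist k)"
    using d_int by (intro nn_integral_eq_integral[symmetric]) auto
  also have "\<dots> \<le> (\<integral>\<^sup>+s. ennreal (K ^ j) * wass (Q s) (P s) \<partial>Pdist k)"
    unfolding d_def using integrable_Q_kernel_pow[OF f_lip f_int]
    by (intro nn_integral_mono lipschitz_integral_diff_le_wass'[OF prob_Q prob_P h_lip])
  also have "\<dots> = ennreal (K ^ j) * (\<integral>\<^sup>+s. wass (Q s) (P s) \<partial>Pdist k)"
    using gap_measurable prob_Pdist(2) by (intro nn_integral_cmult) (simp cong: measurable_cong_sets)
  also have "\<dots> = ennreal (K ^ j * gap k)"
    using gap_finite[of k] K_nonneg unfolding gap_def by (simp add: ennreal_mult ennreal_enn2real_if)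
  finally have "\<bar>\<integral>s. d s \<partial>Pdist k\<bar> \<le> K ^ j * gap k"
    by (rule ennreal_le_iff[THEN iffD1, rotated]) (simp add: K_nonneg gap_def)
  then show ?thesis unfolding diff_eq .
qed

lemma kernel_pow_telescope_le:
  "\<bar>(\<integral>x. kernel_pow Q (m + j) f x \<partial>Pdist 0) - (\<integral>x. kernel_pow Q j f x \<partial>Pdist m)\<bar>
    \<le> (\<Sum>k<m. K ^ (m + j - 1 - k) * gap k)"
proof (induction m arbitrary: j)
  case 0
  then show ?case by simp
next
  case (Suc m)
  have "\<bar>(\<integral>x. kernel_pow Q (Suc m + j) f x \<partial>Pdist 0) - (\<integral>x. kernel_pow Q (Suc j) f x \<partial>Pdist m)\<bar>
      \<le> (\<Sum>k<m. K ^ (Suc m + j - 1 - k) * gap k)"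
    using Suc.IH[of "Suc j"] by simp
  then have "\<bar>(\<integral>x. kernel_pow Q (Suc m + j) f x \<partial>Pdist 0) - (\<integral>x. kernel_pow Q j f x \<partial>Pdist (Suc m))\<bar>
      \<le> (\<Sum>k<m. K ^ (Suc m + j - 1 - k) * gap k) + K ^ j * gap m"
    using kernel_pow_step_le_gap[where j=j and k=m] by linarith
  then show ?case by simp
qed

lemma integral_Qdist_Pdist_diff_le:
  "\<bar>(\<integral>x. f x \<partial>Qdist t) - (\<integral>x. f x \<partial>Pdist t)\<bar> \<le> (\<Sum>k<t. K ^ (t - 1 - k) * gap k)"
  using kernel_pow_telescope_le[of t 0] integral_Qdist_kernel_pow[OF f_lip f_int, of 0 t] by simp

end

lemma
  assumes \<gamma>: "0 < \<gamma>" "\<gamma> < 1" and fin: "(\<integral>\<^sup>+s. wass (Q s) (P s) \<partial>disc_dist \<gamma> \<rho> P) \<noteq> \<top>"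
  shows gap_finite_if_disc_finite: "(\<integral>\<^sup>+s. wass (Q s) (P s) \<partial>Pdist k) \<noteq> \<top>"
    and summable_discounted_gap: "summable (\<lambda>t. (1 - \<gamma>) * \<gamma> ^ t * gap t)"
    and nn_integral_disc_dist_gap:
      "(\<integral>\<^sup>+s. wass (Q s) (P s) \<partial>disc_dist \<gamma> \<rho> P) = ennreal (\<Sum>t. (1 - \<gamma>) * \<gamma> ^ t * gap t)"
proof -
  let ?c = "\<lambda>t. (1 - \<gamma>) * \<gamma> ^ t"
  have c_pos: "0 < ?c t" for t using \<gamma> by simp
  have I_eq: "(\<integral>\<^sup>+s. wass (Q s) (P s) \<partial>disc_dist \<gamma> \<rho> P)
      = (\<Sum>t. ennreal (?c t) * (\<integral>\<^sup>+s. wass (Q s) (P s) \<partial>Pdist t))"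
    by (rule nn_integral_disc_dist[OF rho P_kernel gap_measurable])
  show finite: "(\<integral>\<^sup>+s. wass (Q s) (P s) \<partial>Pdist k) \<noteq> \<top>" for k
  proof -
    have "ennreal (?c k) * (\<integral>\<^sup>+s. wass (Q s) (P s) \<partial>Pdist k) < \<top>"
      using fin unfolding I_eq less_top by (rule ennreal_suminf_lessD)
    moreover have "ennreal (?c k) \<noteq> 0" using \<gamma> by simp
    ultimately show ?thesis by (auto simp only: ennreal_mult_top if_False)
  qed
  have c_gap_nonneg: "0 \<le> ?c t * gap t" for t using c_pos[of t] gap_nonneg[of t] by simp
  have "(\<integral>\<^sup>+s. wass (Q s) (P s) \<partial>Pdist t) = ennreal (gap t)" for t
    using finite[of t] unfolding gap_def by (simp add: ennreal_enn2real_if)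
  then have "ennreal (?c t) * (\<integral>\<^sup>+s. wass (Q s) (P s) \<partial>Pdist t) = ennreal (?c t * gap t)" for t
    using ennreal_mult[OF less_imp_le[OF c_pos] gap_nonneg, of t t] by simp
  then have I_eq': "(\<integral>\<^sup>+s. wass (Q s) (P s) \<partial>disc_dist \<gamma> \<rho> P) = (\<Sum>t. ennreal (?c t * gap t))"
    unfolding I_eq by simp
  show summable: "summable (\<lambda>t. ?c t * gap t)"
    using fin c_gap_nonneg unfolding I_eq' by (intro summable_suminf_not_top) auto
  show "(\<integral>\<^sup>+s. wass (Q s) (P s) \<partial>disc_dist \<gamma> \<rho> P) = ennreal (\<Sum>t. ?c t * gap t)"
    unfolding I_eq' using c_gap_nonneg summable by (intro suminf_ennreal_eq) (auto intro: summable_sums)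
qed

lemma integral_disc_dist_diff_le:
  fixes f :: "'s \<Rightarrow> real"
  assumes \<gamma>: "0 < \<gamma>" "\<gamma> < 1" "\<gamma> * K < 1" and f: "1-lipschitz_on UNIV f"
    and int_Q: "integrable (disc_dist \<gamma> \<rho> Q) f" and int_P: "integrable (disc_dist \<gamma> \<rho> P) f"
    and fin: "(\<integral>\<^sup>+s. wass (Q s) (P s) \<partial>disc_dist \<gamma> \<rho> P) \<noteq> \<top>"
  shows "\<bar>(\<integral>x. f x \<partial>disc_dist \<gamma> \<rho> Q) - (\<integral>x. f x \<partial>disc_dist \<gamma> \<rho> P)\<bar>
    \<le> \<gamma> / (1 - \<gamma> * K) * (\<Sum>t. (1 - \<gamma>) * \<gamma> ^ t * gap t)"
proof -
  let ?c = "\<lambda>t. (1 - \<gamma>) * \<gamma> ^ t"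
  have c_nonneg: "0 \<le> ?c t" for t using \<gamma> by simp
  have f_meas: "f \<in> borel_measurable borel" by (rule lipschitz_borel_measurable[OF f refl])
  note Q_series = integrable_state_dist_if_disc_dist[OF rho Q_kernel f_meas \<gamma>(1,2) int_Q]
    summable_integral_state_dist[OF rho Q_kernel f_meas \<gamma>(1,2) int_Q]
    integral_disc_dist[OF rho Q_kernel f_meas \<gamma>(1,2) int_Q]
  note P_series = summable_integral_state_dist[OF rho P_kernel f_meas \<gamma>(1,2) int_P]
    integral_disc_dist[OF rho P_kernel f_meas \<gamma>(1,2) int_P]
  show ?thesis
    unfolding Q_series(3) P_series(2)
  proof (rule abs_suminf_diff_le)
    show "summable (\<lambda>t. ?c t * (\<integral>x. f x \<partial>Qdist t))" "summable (\<lambda>t. ?c t * (\<integral>x. f x \<partial>Pdist t))"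
      using Q_series(2) P_series(1) by (auto intro: summable_norm_cancel)
    show "\<bar>?c t * (\<integral>x. f x \<partial>Qdist t) - ?c t * (\<integral>x. f x \<partial>Pdist t)\<bar>
        \<le> ?c t * (\<Sum>k<t. K ^ (t - 1 - k) * gap k)" for t
    proof -
      have "\<bar>?c t * (\<integral>x. f x \<partial>Qdist t) - ?c t * (\<integral>x. f x \<partial>Pdist t)\<bar>
          = ?c t * \<bar>(\<integral>x. f x \<partial>Qdist t) - (\<integral>x. f x \<partial>Pdist t)\<bar>"
        by (simp only: right_diff_distrib[symmetric] abs_mult[of "?c t"] abs_of_nonneg[OF c_nonneg])
      also have "\<dots> \<le> ?c t * (\<Sum>k<t. K ^ (t - 1 - k) * gap k)"
        using integral_Qdist_Pdist_diff_le[OF f Q_series(1) gap_finite_if_disc_finite[OF \<gamma>(1,2) fin]]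
          c_nonneg
        by (rule mult_left_mono)
      finally show ?thesis .
    qed
    have "summable (\<lambda>t. norm (?c t * gap t))"
      using summable_discounted_gap[OF \<gamma>(1,2) fin] c_nonneg gap_nonneg
      by (simp only: real_norm_def abs_of_nonneg mult_nonneg_nonneg)
    then show "(\<lambda>t. ?c t * (\<Sum>k<t. K ^ (t - 1 - k) * gap k))
        sums (\<gamma> / (1 - \<gamma> * K) * (\<Sum>t. ?c t * gap t))"
      using \<gamma> K_nonneg by (intro sums_discounted_convolution) auto
  qed
qed

lemma wass_disc_dist_le:
  assumes \<gamma>: "0 < \<gamma>" "\<gamma> < 1" "\<gamma> * K < 1"
  shows "wass (disc_dist \<gamma> \<rho> Q) (disc_dist \<gamma> \<rho> P)
    \<le> ennreal (\<gamma> / (1 - \<gamma> * K)) * (\<integral>\<^sup>+s. wass (Q s) (P s) \<partial>disc_dist \<gamma> \<rho> P)"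
  unfolding wass_def[of "disc_dist \<gamma> \<rho> Q"]
proof (rule SUP_least, safe)
  fix f :: "'s \<Rightarrow> real"
  assume f: "1-lipschitz_on UNIV f" and int_Q: "integrable (disc_dist \<gamma> \<rho> Q) f"
    and int_P: "integrable (disc_dist \<gamma> \<rho> P) f"
  let ?I = "\<integral>\<^sup>+s. wass (Q s) (P s) \<partial>disc_dist \<gamma> \<rho> P"
  let ?C = "\<gamma> / (1 - \<gamma> * K)"
  let ?X = "\<Sum>t. (1 - \<gamma>) * \<gamma> ^ t * gap t"
  show "ennreal \<bar>(\<integral>x. f x \<partial>disc_dist \<gamma> \<rho> Q) - (\<integral>x. f x \<partial>disc_dist \<gamma> \<rho> P)\<bar> \<le> ennreal ?C * ?I"
  proof (cases "?I = \<top>")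
    case True
    moreover have "ennreal ?C \<noteq> 0" using \<gamma> by simp
    ultimately show ?thesis by (simp only: ennreal_mult_top if_False top_greatest)
  next
    case False
    have "ennreal \<bar>(\<integral>x. f x \<partial>disc_dist \<gamma> \<rho> Q) - (\<integral>x. f x \<partial>disc_dist \<gamma> \<rho> P)\<bar> \<le> ennreal (?C * ?X)"
      by (rule ennreal_leI integral_disc_dist_diff_le[OF \<gamma> f int_Q int_P False])+
    also have "\<dots> = ennreal ?C * ennreal ?X"
      using \<gamma> gap_nonneg summable_discounted_gap[OF \<gamma>(1,2) False]
      by (intro ennreal_mult) (auto intro!: suminf_nonneg)
    finally show ?thesis unfolding nn_integral_disc_dist_gap[OF \<gamma>(1,2) False] .
  qed
qed

end

theorem theorem1:
  fixes \<rho> :: "'s::metric_space measure"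
    and p p' :: "'s \<Rightarrow> 'a::metric_space \<Rightarrow> 's measure"
    and \<pi> \<pi>' :: "'s \<Rightarrow> 'a measure"
    and \<gamma> L\<^sub>p L\<^sub>\<pi> :: real
  assumes gamma: "0 \<le> \<gamma>" "\<gamma> < 1"
    and rho: "\<rho> \<in> space (prob_algebra borel)"
    and p_kernel: "(\<lambda>(s, a). p s a) \<in> borel \<Otimes>\<^sub>M borel \<rightarrow>\<^sub>M prob_algebra borel"
    and p'_kernel: "(\<lambda>(s, a). p' s a) \<in> borel \<Otimes>\<^sub>M borel \<rightarrow>\<^sub>M prob_algebra borel"
    and pi_kernel: "\<pi> \<in> borel \<rightarrow>\<^sub>M prob_algebra borel"
    and pi'_kernel: "\<pi>' \<in> borel \<rightarrow>\<^sub>M prob_algebra borel"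
    and Lnonneg: "0 \<le> L\<^sub>p" "0 \<le> L\<^sub>\<pi>"
    and pi'_LC: "policy_LC L\<^sub>\<pi> \<pi>'"
    and p'_LC: "config_LC L\<^sub>p p'"
    and contr: "\<gamma> * L\<^sub>p * (1 + L\<^sub>\<pi>) < 1"
    and meas: "(\<lambda>s. wass (state_kernel p' \<pi>' s) (state_kernel p \<pi> s)) \<in> borel_measurable borel"
  shows "wass (disc_dist \<gamma> \<rho> (state_kernel p' \<pi>')) (disc_dist \<gamma> \<rho> (state_kernel p \<pi>))
         \<le> ennreal (\<gamma> / (1 - \<gamma> * L\<^sub>p * (1 + L\<^sub>\<pi>)))
            * (\<integral>\<^sup>+ s. wass (state_kernel p' \<pi>' s) (state_kernel p \<pi> s) \<partial>(disc_dist \<gamma> \<rho> (state_kernel p \<pi>)))"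
proof (cases "\<gamma> = 0")
  case True
  then show ?thesis by (simp add: disc_dist_zero wass_self)
next
  case False
  interpret kernel_comparison \<rho> "state_kernel p' \<pi>'" "state_kernel p \<pi>" "L\<^sub>p * (1 + L\<^sub>\<pi>)"
  proof
    show "state_kernel p' \<pi>' \<in> borel \<rightarrow>\<^sub>M prob_algebra borel"
      by (rule state_kernel_prob_kernel[OF p'_kernel pi'_kernel])
    show "state_kernel p \<pi> \<in> borel \<rightarrow>\<^sub>M prob_algebra borel"
      by (rule state_kernel_prob_kernel[OF p_kernel pi_kernel])
    show "wass (state_kernel p' \<pi>' s) (state_kernel p' \<pi>' s') \<le> ennreal (L\<^sub>p * (1 + L\<^sub>\<pi>) * dist s s')"
      for s s'
      by (rule state_kernel_lipschitz[OF p'_kernel pi'_kernel Lnonneg pi'_LC p'_LC])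
  qed (use rho Lnonneg meas in auto)
  have "\<gamma> * (L\<^sub>p * (1 + L\<^sub>\<pi>)) < 1" using contr by (simp add: mult.assoc)
  then show ?thesis
    using wass_disc_dist_le[of \<gamma>] gamma False by (simp add: mult.assoc)
qed

end
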